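(* There exist absolute constants $C_1,C_2>0$ such that the following holds. Let $\eta'\in(0,1)$, $k\in\mathbb{N}$, and $w=\lceil C_1k/(\eta')^2\rceil$. Let $\ell\in\mathbb{N}$, $\Delta=2^\ell$, $\mathbf{s}\in\mathbb{R}_{\ge0}^{G_\Delta}$, and let $\boldsymbol{\nu}_i\in\mathbb{R}^{C_{2^i}}$ ($i=0,\dots,\ell$) be arbitrary. Set $\mathbf{y}'_i=2^{-i}(\mathbf{P}_i\mathbf{s}+\boldsymbol{\nu}_i)$, $\mathbf{y}'=[\mathbf{y}'_0\cdots\mathbf{y}'_\ell]$. Run: $S_0=C_1$; for $i=1,\dots,\ell$, $T_i$ = children of cells in $S_{i-1}$, $S_i$ = a set of $\min\{w,|T_i|\}$ cells of $T_i$ with largest $\mathbf{y}'$-values; $S=\bigcup_iS_i$, $\hat{\mathbf{y}}=\mathbf{y}'|_S$; and let $\hat{\mathbf{s}}\in\arg\min_{\mathbf{s}'\in\mathbb{R}_{\ge0}^{G_\Delta}}\|\hat{\mathbf{y}}-\mathbf{P}\mathbf{s}'\|_1$. Let $\mathbf{y}^*\in\arg\min_{\mathbf{y}\in\mathcal{M}_w}\|\mathbf{P}\mathbf{s}-\mathbf{y}\|_1$, $T^*\in\mathcal{T}_w$ with $\mathrm{supp}(\mathbf{y}^* )\subseteq T^*$, and $V_i=(T^*\cap C_{2^i})\setminus S_i$. Then $$\|\mathbf{s}-\hat{\mathbf{s}}\|_{\mathrm{EMD}}\le\eta'\cdot\min_{\mathbf{s}'\ k\text{-sparse}}\|\mathbf{s}-\mathbf{s}'\|_{\mathrm{EMD}}+C_2\sum_{i=0}^\ell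 2^{-i}\big\|\boldsymbol{\nu}_i|_{V_i\cup S_i}\big\|_1,$$ the minimum over $k$-sparse $\mathbf{s}'\in\mathbb{R}^{G_\Delta}$.
   Context: $G_\Delta=\{(a/\Delta,b/\Delta): a,b\in\{0,\dots,\Delta-1\}\}$. Level-$i$ cells: $C_{2^i}=\{[a,a+2^{-i})\times[b,b+2^{-i}):(a,b)\in G_{2^i}\}$; $C_1$ is the single root cell $[0,1)^2$. $\mathbf{P}_i\in\{0,1\}^{C_{2^i}\times G_\Delta}$ with $\mathbf{P}_i(c,p)=1$ iff $p\in c$; $\mathbf{P}$ stacks $\mathbf{P}_0,2^{-1}\mathbf{P}_1,\dots,2^{-\ell}\mathbf{P}_\ell$. A cell $c'\in C_{2^i}$ is a child of $c\in C_{2^{i-1}}$ if $c'\subseteq c$ (a 4-ary tree rooted at $[0,1)^2$). $\mathcal{T}_w$: subtrees containing the root, closed under parents, with at most $w$ cells per level. $\mathcal{M}_w$: vectors $\mathbf{y}=[\mathbf{y}_0\cdots\mathbf{y}_\ell]$, $\mathbf{y}_i\in\mathbb{R}_{\ge0}^{C_{2^i}}$, with support in some $T\in\mathcal{T}_w$ and $\mathbf{y}(p)\ge2\sum_{c\text{ child of }p}\mathbf{y}(c)$ for all cells $p$ of levels $0,\dots,\ell-1$. $\mathbf{v}|_S$ is $\mathbf{v}$ restricted to $S$ (zero elsewhere); a vector is $k$-sparse if it has at most $k$ nonzero coordinates. $\mathrm{EMD}(\mathbf{p},\mathbf{q})$ for nonnegative $\mathbf{p},\mathbf{q}$ of equal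 mass is the minimum of $\sum\gamma(x,y)\|x-y\|_1$ over nonnegative couplings $\gamma$ with marginals $\mathbf{p},\mathbf{q}$; the EMD norm is $\|\mathbf{w}\|_{\mathrm{EMD}}=\min\{\mathrm{EMD}(\mathbf{p},\mathbf{q})+2\|\mathbf{r}\|_1:\mathbf{p},\mathbf{q}\ge0,\ \mathbf{p}-\mathbf{q}+\mathbf{r}=\mathbf{w},\ \|\mathbf{p}\|_1=\|\mathbf{q}\|_1\}$. *)

theory Defs
  imports Complex_Main
begin

text \<open>Grid points (a/Delta, b/Delta) with Delta = 2^l are represented by index pairs (a,b).
  Level-i cells [a 2^-i,(a+1)2^-i) x [b 2^-i,(b+1)2^-i) are represented by triples (i,a,b).\<close>

type_synonym point = "nat \<times> nat"
type_synonym cell = "nat \<times> nat \<times> nat"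

definition grid :: "nat \<Rightarrow> point set" where
  "grid l = {0..<2^l} \<times> {0..<2^l}"

definition grid_dist :: "nat \<Rightarrow> point \<Rightarrow> point \<Rightarrow> real" where
  "grid_dist l x y = (\<bar>real (fst x) - real (fst y)\<bar> + \<bar>real (snd x) - real (snd y)\<bar>) / 2^l"

definition cells :: "nat \<Rightarrow> cell set" where
  "cells i = {(i, a, b) | a b. a < 2^i \<and> b < 2^i}"

definition all_cells :: "nat \<Rightarrow> cell set" where
  "all_cells l = (\<Union>i\<le>l. cells i)"

definition root :: cell where "root = (0, 0, 0)"

definition level :: "cell \<Rightarrow> nat" where "level c = fst c"

definition parent :: "cell \<Rightarrow> cell" where
  "parent c = (case c of (i, a, b) \<Rightarrow> (i - 1, a div 2, b div 2))"

definition is_child :: "cell \<Rightarrow> cell \<Rightarrow> bool" where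
  "is_child c' c \<longleftrightarrow> level c' = level c + 1 \<and> parent c' = c"

definition in_cell :: "nat \<Rightarrow> cell \<Rightarrow> point \<Rightarrow> bool" where
  "in_cell l c p = (case c of (i, a, b) \<Rightarrow> fst p div 2^(l - i) = a \<and> snd p div 2^(l - i) = b)"

definition Pi_vec :: "nat \<Rightarrow> (point \<Rightarrow> real) \<Rightarrow> cell \<Rightarrow> real" where
  "Pi_vec l s c = (\<Sum>p\<in>grid l. if in_cell l c p then s p else 0)"

definition P_vec :: "nat \<Rightarrow> (point \<Rightarrow> real) \<Rightarrow> cell \<Rightarrow> real" where
  "P_vec l s c = Pi_vec l s c / 2 ^ level c"

definition l1_cells :: "nat \<Rightarrow> (cell \<Rightarrow> real) \<Rightarrow> real" where
  "l1_cells l y = (\<Sum>c\<in>all_cells l. \<bar>y c\<bar>)"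

definition l1_grid :: "nat \<Rightarrow> (point \<Rightarrow> real) \<Rightarrow> real" where
  "l1_grid l v = (\<Sum>p\<in>grid l. \<bar>v p\<bar>)"

definition trees :: "nat \<Rightarrow> nat \<Rightarrow> cell set set" where
  "trees l w = {T. T \<subseteq> all_cells l \<and> root \<in> T \<and>
      (\<forall>c\<in>T. level c > 0 \<longrightarrow> parent c \<in> T) \<and>
      (\<forall>i\<le>l. card (T \<inter> cells i) \<le> w)}"

definition model :: "nat \<Rightarrow> nat \<Rightarrow> (cell \<Rightarrow> real) set" where
  "model l w = {y. (\<forall>c\<in>all_cells l. y c \<ge> 0) \<and>
      (\<exists>T\<in>trees l w. \<forall>c\<in>all_cells l. y c \<noteq> 0 \<longrightarrow> c \<in> T) \<and>
      (\<forall>c\<in>all_cells l. level c < l \<longrightarrow>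
          y c \<ge> 2 * (\<Sum>c'\<in>{c'\<in>all_cells l. is_child c' c}. y c'))}"

definition emd :: "nat \<Rightarrow> (point \<Rightarrow> real) \<Rightarrow> (point \<Rightarrow> real) \<Rightarrow> real" where
  "emd l p q = Inf {(\<Sum>z\<in>grid l \<times> grid l. \<gamma> z * grid_dist l (fst z) (snd z)) | \<gamma>.
      (\<forall>z\<in>grid l \<times> grid l. \<gamma> z \<ge> 0) \<and>
      (\<forall>x\<in>grid l. (\<Sum>y\<in>grid l. \<gamma> (x, y)) = p x) \<and>
      (\<forall>y\<in>grid l. (\<Sum>x\<in>grid l. \<gamma> (x, y)) = q y)}"

definition emd_norm :: "nat \<Rightarrow> (point \<Rightarrow> real) \<Rightarrow> real" where
  "emd_norm l v = Inf {emd l p q + 2 * l1_grid l r | p q r.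
      (\<forall>x\<in>grid l. p x \<ge> 0 \<and> q x \<ge> 0 \<and> p x - q x + r x = v x) \<and>
      (\<Sum>x\<in>grid l. p x) = (\<Sum>x\<in>grid l. q x)}"

definition sparse :: "nat \<Rightarrow> nat \<Rightarrow> (point \<Rightarrow> real) \<Rightarrow> bool" where
  "sparse l k v \<longleftrightarrow> card {p\<in>grid l. v p \<noteq> 0} \<le> k"

definition y_noisy :: "nat \<Rightarrow> (point \<Rightarrow> real) \<Rightarrow> (cell \<Rightarrow> real) \<Rightarrow> cell \<Rightarrow> real" where
  "y_noisy l s \<nu> c = (Pi_vec l s c + \<nu> c) / 2 ^ level c"

definition valid_run :: "nat \<Rightarrow> nat \<Rightarrow> (cell \<Rightarrow> real) \<Rightarrow> (nat \<Rightarrow> cell set) \<Rightarrow> bool" where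
  "valid_run l w y S \<longleftrightarrow> S 0 = {root} \<and>
     (\<forall>i\<in>{1..l}. let T = {c'\<in>cells i. \<exists>c\<in>S (i - 1). is_child c' c} in
        S i \<subseteq> T \<and> card (S i) = min w (card T) \<and>
        (\<forall>c\<in>S i. \<forall>c'\<in>T - S i. y c' \<le> y c))"

end

theory Submission
  imports Defs
begin

(* Quadtree embedding: a vector v on the grid is a mass at the origin plus, for every non-root
   cell c of level i, a dipole of size (P_i v)(c) between the corners of c and of its parent,
   which are at distance at most 2^-(i-1).  By subadditivity of the EMD norm,
   ||v||_EMD <= 2 ||P v||_1.  Since s_hat fits y_hat at least as well as s does, this gives
   ||s - s_hat||_EMD <= 4 ||P s - y_hat||_1, i.e. at most 4 times the noise on the selected
   cells plus the mass of P s outside the run.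
   Greedy selection: a cell missed by the run either has a missed parent, and these carry half
   the missed mass of the level above, or lost the top-w selection.  Matching the lost cells of
   a tree T* of width w with selected cells outside T*, the lost mass is bounded by the mass of
   P s outside T* plus the noise on T* and on the run.
   Sparse lower bound: the mass of P s outside T* is at most the model error ||P s - y*||_1.
   For k-sparse s', the cells within K = ceil(16 / eta) cells of the support of s' form a tree
   of width at most w, and outside of it P s is at most 2/K times the pairing of s with the
   distance to the support, which is 1-Lipschitz and hence bounded by ||s - s'||_EMD. *)

section \<open>Cells and the measurement operator\<close>

definition cell_of :: "nat \<Rightarrow> nat \<Rightarrow> point \<Rightarrow> cell" where
  "cell_of l i p = (i, fst p div 2^(l - i), snd p div 2^(l - i))"

lemma finite_grid [simp]: "finite (grid l)"
  by (simp add: grid_def)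

lemma finite_cells [simp]: "finite (cells i)"
proof -
  have "cells i = (\<lambda>(a, b). (i, a, b)) ` ({..<2^i} \<times> {..<2^i})"
    by (auto simp: cells_def image_iff)
  then show ?thesis by simp
qed

lemma finite_all_cells [simp]: "finite (all_cells l)"
  by (simp add: all_cells_def)

lemma level_of_mem_cells: "c \<in> cells i \<Longrightarrow> level c = i"
  by (auto simp: cells_def level_def)

lemma cells_disjoint: "i \<noteq> j \<Longrightarrow> cells i \<inter> cells j = {}"
  by (auto simp: cells_def)

lemma cells_0: "cells 0 = {root}"
  by (auto simp: cells_def root_def)

lemma sum_all_cells_diff: "(\<Sum>c\<in>all_cells l - X. h c) = (\<Sum>i\<le>l. \<Sum>c\<in>cells i - X. h c)"
proof -
  have "all_cells l - X = (\<Union>i\<le>l. cells i - X)"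
    unfolding all_cells_def by blast
  also have "(\<Sum>c\<in>\<dots>. h c) = (\<Sum>i\<le>l. \<Sum>c\<in>cells i - X. h c)"
    by (rule sum.UNION_disjoint) (use cells_disjoint in auto)
  finally show ?thesis .
qed

lemma parent_in_cells: "c \<in> cells (Suc i) \<Longrightarrow> parent c \<in> cells i"
  by (auto simp: cells_def parent_def less_mult_imp_div_less mult.commute)

definition children :: "nat \<Rightarrow> cell set \<Rightarrow> cell set" where
  "children i X = {c\<in>cells (Suc i). parent c \<in> X}"

lemma finite_children [simp]: "finite (children i X)"
  by (simp add: children_def)

lemma children_eq:
  assumes "c \<in> cells i" "i < l"
  shows "{c'\<in>all_cells l. is_child c' c} = children i {c}"
  using assms by (auto simp: children_def all_cells_def is_child_def level_of_mem_cells)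

lemma cell_of_in_cells:
  assumes "p \<in> grid l" "i \<le> l"
  shows "cell_of l i p \<in> cells i"
proof -
  have "(2::nat)^l = 2^i * 2^(l - i)"
    using assms(2) by (simp flip: power_add)
  then show ?thesis
    using assms(1) by (auto simp: grid_def cells_def cell_of_def less_mult_imp_div_less)
qed

lemma parent_cell_of:
  assumes "i < l"
  shows "parent (cell_of l (Suc i) p) = cell_of l i p"
proof -
  have "l - i = Suc (l - Suc i)"
    using assms by simp
  then have "(2::nat)^(l - i) = 2^(l - Suc i) * 2"
    by simp
  then show ?thesis by (simp add: parent_def cell_of_def div_mult2_eq)
qed

lemma Pi_vec_eq_sum:
  assumes "c \<in> cells i"
  shows "Pi_vec l s c = (\<Sum>p\<in>{p\<in>grid l. cell_of l i p = c}. s p)"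
proof -
  have "in_cell l c p \<longleftrightarrow> cell_of l i p = c" for p
    using assms by (auto simp: cells_def in_cell_def cell_of_def)
  then show ?thesis
    unfolding Pi_vec_def by (simp only: sum.inter_filter[OF finite_grid])
qed

lemma sum_Pi_vec:
  assumes "C \<subseteq> cells i"
  shows "(\<Sum>c\<in>C. Pi_vec l s c) = (\<Sum>p\<in>{p\<in>grid l. cell_of l i p \<in> C}. s p)"
proof -
  have "finite C" by (rule finite_subset[OF assms finite_cells])
  have "Pi_vec l s c = (\<Sum>p\<in>{p\<in>{p\<in>grid l. cell_of l i p \<in> C}. cell_of l i p = c}. s p)"
    if "c \<in> C" for c
  proof -
    have "{p\<in>{p\<in>grid l. cell_of l i p \<in> C}. cell_of l i p = c} = {p\<in>grid l. cell_of l i p = c}"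
      using that by auto
    moreover have "c \<in> cells i" using assms that by blast
    ultimately show ?thesis by (simp only: Pi_vec_eq_sum)
  qed
  then have "(\<Sum>c\<in>C. Pi_vec l s c) = (\<Sum>c\<in>C. \<Sum>p\<in>{p\<in>{p\<in>grid l. cell_of l i p \<in> C}. cell_of l i p = c}. s p)"
    by (rule sum.cong[OF refl])
  also have "\<dots> = (\<Sum>p\<in>{p\<in>grid l. cell_of l i p \<in> C}. s p)"
    using \<open>finite C\<close> by (intro sum.group) auto
  finally show ?thesis .
qed

lemma sum_P_vec_eq_sum_Pi_vec:
  assumes "C \<subseteq> cells i"
  shows "(\<Sum>c\<in>C. P_vec l s c) = (\<Sum>c\<in>C. Pi_vec l s c) / 2^i"
proof -
  have "(\<Sum>c\<in>C. P_vec l s c) = (\<Sum>c\<in>C. Pi_vec l s c / 2^i)"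
    using assms by (intro sum.cong) (auto simp: P_vec_def level_of_mem_cells)
  then show ?thesis by (simp add: sum_divide_distrib)
qed

lemma sum_P_vec:
  assumes "C \<subseteq> cells i"
  shows "(\<Sum>c\<in>C. P_vec l s c) = (\<Sum>p\<in>{p\<in>grid l. cell_of l i p \<in> C}. s p) / 2^i"
  using assms by (simp add: sum_P_vec_eq_sum_Pi_vec sum_Pi_vec)

lemma sum_Pi_vec_children:
  assumes "X \<subseteq> cells i" "i < l"
  shows "(\<Sum>c\<in>children i X. Pi_vec l s c) = (\<Sum>c\<in>X. Pi_vec l s c)"
proof -
  have "(\<Sum>c\<in>children i X. Pi_vec l s c) = (\<Sum>p\<in>{p\<in>grid l. cell_of l (Suc i) p \<in> children i X}. s p)"
    by (rule sum_Pi_vec) (auto simp: children_def)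
  also have "{p\<in>grid l. cell_of l (Suc i) p \<in> children i X} = {p\<in>grid l. cell_of l i p \<in> X}"
    using assms(2) by (auto simp: children_def parent_cell_of cell_of_in_cells)
  finally show ?thesis by (simp add: sum_Pi_vec[OF assms(1)])
qed

lemma sum_P_vec_children:
  assumes "X \<subseteq> cells i" "i < l"
  shows "(\<Sum>c\<in>children i X. P_vec l s c) = (\<Sum>c\<in>X. P_vec l s c) / 2"
proof -
  have "children i X \<subseteq> cells (Suc i)"
    by (auto simp: children_def)
  then show ?thesis
    using assms by (simp add: sum_P_vec_eq_sum_Pi_vec[of _ "Suc i"] sum_P_vec_eq_sum_Pi_vec[of _ i]
        sum_Pi_vec_children)
qed

lemma Pi_vec_nonneg: "\<forall>p\<in>grid l. s p \<ge> 0 \<Longrightarrow> Pi_vec l s c \<ge> 0"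
  unfolding Pi_vec_def by (auto intro: sum_nonneg)

lemma P_vec_nonneg: "\<forall>p\<in>grid l. s p \<ge> 0 \<Longrightarrow> P_vec l s c \<ge> 0"
  by (simp add: P_vec_def Pi_vec_nonneg)

lemma P_vec_diff: "P_vec l (\<lambda>p. s p - t p) c = P_vec l s c - P_vec l t c"
proof -
  have "Pi_vec l (\<lambda>p. s p - t p) c = Pi_vec l s c - Pi_vec l t c"
    unfolding Pi_vec_def sum_subtractf[symmetric] by (rule sum.cong) auto
  then show ?thesis by (simp add: P_vec_def diff_divide_distrib)
qed

section \<open>Earth mover distance and its norm\<close>

lemma grid_dist_nonneg: "grid_dist l x y \<ge> 0"
  by (simp add: grid_dist_def)

lemma grid_dist_self [simp]: "grid_dist l x x = 0"
  by (simp add: grid_dist_def)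

lemma grid_dist_commute: "grid_dist l x y = grid_dist l y x"
  by (simp add: grid_dist_def abs_minus_commute)

lemma grid_dist_triangle: "grid_dist l x z \<le> grid_dist l x y + grid_dist l y z"
  unfolding grid_dist_def by (simp add: add_divide_distrib[symmetric] divide_right_mono)

lemma le_Inf_add_Inf:
  fixes x :: real
  assumes "A \<noteq> {}" "B \<noteq> {}" "\<And>a b. a \<in> A \<Longrightarrow> b \<in> B \<Longrightarrow> x \<le> a + b"
  shows "x \<le> Inf A + Inf B"
proof -
  have "x - Inf A \<le> b" if "b \<in> B" for b
  proof -
    have "x - b \<le> Inf A"
      using assms(1,3) that by (intro cInf_greatest) (auto simp: algebra_simps)
    then show ?thesis by simp
  qed
  then have "x - Inf A \<le> Inf B"
    using assms(2) by (intro cInf_greatest) auto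
  then show ?thesis by simp
qed

definition coupling :: "nat \<Rightarrow> (point \<Rightarrow> real) \<Rightarrow> (point \<Rightarrow> real) \<Rightarrow> (point \<times> point \<Rightarrow> real) \<Rightarrow> bool" where
  "coupling l p q \<gamma> \<longleftrightarrow> (\<forall>z\<in>grid l \<times> grid l. \<gamma> z \<ge> 0) \<and>
      (\<forall>x\<in>grid l. (\<Sum>y\<in>grid l. \<gamma> (x, y)) = p x) \<and>
      (\<forall>y\<in>grid l. (\<Sum>x\<in>grid l. \<gamma> (x, y)) = q y)"

definition transport_cost :: "nat \<Rightarrow> (point \<times> point \<Rightarrow> real) \<Rightarrow> real" where
  "transport_cost l \<gamma> = (\<Sum>z\<in>grid l \<times> grid l. \<gamma> z * grid_dist l (fst z) (snd z))"

lemma emd_eq_Inf_transport_cost: "emd l p q = Inf {transport_cost l \<gamma> | \<gamma>. coupling l p q \<gamma>}"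
  by (simp add: emd_def coupling_def transport_cost_def)

lemma coupling_exists:
  assumes "\<forall>x\<in>grid l. p x \<ge> 0 \<and> q x \<ge> 0" "(\<Sum>x\<in>grid l. p x) = (\<Sum>x\<in>grid l. q x)"
  shows "\<exists>\<gamma>. coupling l p q \<gamma>"
proof (cases "(\<Sum>x\<in>grid l. q x) = 0")
  case True
  then have "p x = 0 \<and> q x = 0" if "x \<in> grid l" for x
    using assms that by (simp add: sum_nonneg_eq_0_iff)
  then have "coupling l p q (\<lambda>_. 0)" by (simp add: coupling_def)
  then show ?thesis by blast
next
  case False
  define Q where "Q = (\<Sum>x\<in>grid l. q x)"
  have "coupling l p q (\<lambda>z. p (fst z) * q (snd z) / Q)"
    using assms False sum_nonneg[of "grid l" q] unfolding coupling_def Q_def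
    by (auto intro!: divide_nonneg_nonneg simp: sum_divide_distrib[symmetric] sum_distrib_left[symmetric]
        sum_distrib_right[symmetric])
  then show ?thesis by blast
qed

lemma lipschitz_pairing_le_transport_cost:
  assumes "coupling l p q \<gamma>" "\<forall>x\<in>grid l. \<forall>y\<in>grid l. f x - f y \<le> grid_dist l x y"
  shows "(\<Sum>x\<in>grid l. f x * (p x - q x)) \<le> transport_cost l \<gamma>"
proof -
  have "(\<Sum>x\<in>grid l. f x * (p x - q x))
      = (\<Sum>x\<in>grid l. \<Sum>y\<in>grid l. \<gamma> (x, y) * f x) - (\<Sum>y\<in>grid l. \<Sum>x\<in>grid l. \<gamma> (x, y) * f y)"
    using assms(1) by (simp add: coupling_def right_diff_distrib sum_subtractf
        sum_distrib_left[symmetric] mult.commute)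
  also have "\<dots> = (\<Sum>x\<in>grid l. \<Sum>y\<in>grid l. \<gamma> (x, y) * (f x - f y))"
    by (subst sum.swap[of _ "grid l"]) (simp add: sum_subtractf right_diff_distrib)
  also have "\<dots> \<le> (\<Sum>x\<in>grid l. \<Sum>y\<in>grid l. \<gamma> (x, y) * grid_dist l x y)"
    using assms by (intro sum_mono mult_left_mono) (auto simp: coupling_def)
  also have "\<dots> = transport_cost l \<gamma>"
    by (simp add: transport_cost_def sum.cartesian_product case_prod_beta)
  finally show ?thesis .
qed

lemma transport_cost_nonneg: "coupling l p q \<gamma> \<Longrightarrow> transport_cost l \<gamma> \<ge> 0"
  using lipschitz_pairing_le_transport_cost[of l p q \<gamma> "\<lambda>_. 0"] by (simp add: grid_dist_nonneg)

lemma lipschitz_pairing_le_emd: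
  assumes "\<forall>x\<in>grid l. p x \<ge> 0 \<and> q x \<ge> 0" "(\<Sum>x\<in>grid l. p x) = (\<Sum>x\<in>grid l. q x)"
    "\<forall>x\<in>grid l. \<forall>y\<in>grid l. f x - f y \<le> grid_dist l x y"
  shows "(\<Sum>x\<in>grid l. f x * (p x - q x)) \<le> emd l p q"
  unfolding emd_eq_Inf_transport_cost
  using coupling_exists[OF assms(1,2)] lipschitz_pairing_le_transport_cost[OF _ assms(3)]
  by (intro cInf_greatest) auto

lemma emd_le_transport_cost: "coupling l p q \<gamma> \<Longrightarrow> emd l p q \<le> transport_cost l \<gamma>"
  unfolding emd_eq_Inf_transport_cost
  by (rule cInf_lower) (auto simp: bdd_below_def intro: transport_cost_nonneg)

lemma emd_add_le:
  assumes "\<forall>x\<in>grid l. p x \<ge> 0 \<and> q x \<ge> 0" "(\<Sum>x\<in>grid l. p x) = (\<Sum>x\<in>grid l. q x)"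
    "\<forall>x\<in>grid l. p' x \<ge> 0 \<and> q' x \<ge> 0" "(\<Sum>x\<in>grid l. p' x) = (\<Sum>x\<in>grid l. q' x)"
  shows "emd l (\<lambda>x. p x + p' x) (\<lambda>x. q x + q' x) \<le> emd l p q + emd l p' q'"
  unfolding emd_eq_Inf_transport_cost[of l p q] emd_eq_Inf_transport_cost[of l p' q']
proof (rule le_Inf_add_Inf)
  fix a b assume "a \<in> {transport_cost l \<gamma> | \<gamma>. coupling l p q \<gamma>}"
    "b \<in> {transport_cost l \<gamma> | \<gamma>. coupling l p' q' \<gamma>}"
  then obtain \<gamma> \<gamma>' where "coupling l p q \<gamma>" "coupling l p' q' \<gamma>'"
    and ab: "a = transport_cost l \<gamma>" "b = transport_cost l \<gamma>'" by blast
  then have "coupling l (\<lambda>x. p x + p' x) (\<lambda>x. q x + q' x) (\<lambda>z. \<gamma> z + \<gamma>' z)"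
    by (simp add: coupling_def sum.distrib)
  then have "emd l (\<lambda>x. p x + p' x) (\<lambda>x. q x + q' x) \<le> transport_cost l (\<lambda>z. \<gamma> z + \<gamma>' z)"
    by (rule emd_le_transport_cost)
  also have "\<dots> = a + b"
    by (simp add: transport_cost_def ab distrib_right sum.distrib)
  finally show "emd l (\<lambda>x. p x + p' x) (\<lambda>x. q x + q' x) \<le> a + b" .
qed (use coupling_exists[OF assms(1,2)] coupling_exists[OF assms(3,4)] in auto)

definition balanced_split ::
    "nat \<Rightarrow> (point \<Rightarrow> real) \<Rightarrow> (point \<Rightarrow> real) \<Rightarrow> (point \<Rightarrow> real) \<Rightarrow> (point \<Rightarrow> real) \<Rightarrow> bool" where
  "balanced_split l v p q r \<longleftrightarrow> (\<forall>x\<in>grid l. p x \<ge> 0 \<and> q x \<ge> 0 \<and> p x - q x + r x = v x) \<and>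
      (\<Sum>x\<in>grid l. p x) = (\<Sum>x\<in>grid l. q x)"

lemma emd_norm_eq_Inf:
  "emd_norm l v = Inf {emd l p q + 2 * l1_grid l r | p q r. balanced_split l v p q r}"
  by (simp add: emd_norm_def balanced_split_def)

lemma balanced_split_trivial: "balanced_split l v (\<lambda>_. 0) (\<lambda>_. 0) v"
  by (simp add: balanced_split_def)

lemma lipschitz_pairing_le_split_cost:
  assumes "balanced_split l v p q r"
    and "\<forall>x\<in>grid l. \<forall>y\<in>grid l. f x - f y \<le> grid_dist l x y" "\<forall>x\<in>grid l. 0 \<le> f x \<and> f x \<le> 2"
  shows "(\<Sum>x\<in>grid l. f x * v x) \<le> emd l p q + 2 * l1_grid l r"
proof -
  have "(\<Sum>x\<in>grid l. f x * v x) = (\<Sum>x\<in>grid l. f x * (p x - q x) + f x * r x)"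
    using assms(1) by (intro sum.cong) (auto simp: balanced_split_def distrib_left[symmetric])
  also have "\<dots> = (\<Sum>x\<in>grid l. f x * (p x - q x)) + (\<Sum>x\<in>grid l. f x * r x)"
    by (rule sum.distrib)
  also have "(\<Sum>x\<in>grid l. f x * r x) \<le> (\<Sum>x\<in>grid l. 2 * \<bar>r x\<bar>)"
  proof (rule sum_mono)
    fix x assume "x \<in> grid l"
    then have "f x * r x \<le> f x * \<bar>r x\<bar>" "f x * \<bar>r x\<bar> \<le> 2 * \<bar>r x\<bar>"
      using assms(3) by (auto intro: mult_left_mono mult_right_mono)
    then show "f x * r x \<le> 2 * \<bar>r x\<bar>" by linarith
  qed
  also have "(\<Sum>x\<in>grid l. f x * (p x - q x)) \<le> emd l p q"
    using assms(1,2) by (intro lipschitz_pairing_le_emd) (auto simp: balanced_split_def)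
  finally show ?thesis by (simp add: l1_grid_def sum_distrib_left)
qed

lemma split_cost_nonneg: "balanced_split l v p q r \<Longrightarrow> 0 \<le> emd l p q + 2 * l1_grid l r"
  using lipschitz_pairing_le_split_cost[of l v p q r "\<lambda>_. 0"] by (simp add: grid_dist_nonneg)

lemma lipschitz_pairing_le_emd_norm:
  assumes "\<forall>x\<in>grid l. \<forall>y\<in>grid l. f x - f y \<le> grid_dist l x y" "\<forall>x\<in>grid l. 0 \<le> f x \<and> f x \<le> 2"
  shows "(\<Sum>x\<in>grid l. f x * v x) \<le> emd_norm l v"
  unfolding emd_norm_eq_Inf
  using balanced_split_trivial lipschitz_pairing_le_split_cost[OF _ assms]
  by (intro cInf_greatest) blast+

lemma emd_norm_nonneg: "0 \<le> emd_norm l v"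
  using lipschitz_pairing_le_emd_norm[of l "\<lambda>_. 0" v] by (simp add: grid_dist_nonneg)

lemma emd_norm_le: "balanced_split l v p q r \<Longrightarrow> emd_norm l v \<le> emd l p q + 2 * l1_grid l r"
  unfolding emd_norm_eq_Inf
  by (rule cInf_lower) (auto simp: bdd_below_def intro: split_cost_nonneg)

lemma emd_norm_cong: "(\<And>x. x \<in> grid l \<Longrightarrow> u x = v x) \<Longrightarrow> emd_norm l u = emd_norm l v"
  by (simp add: emd_norm_def)

lemma emd_zero [simp]: "emd l (\<lambda>_. 0) (\<lambda>_. 0) = 0"
proof -
  have "coupling l (\<lambda>_. 0) (\<lambda>_. 0) (\<lambda>_. 0)"
    by (simp add: coupling_def)
  then have "emd l (\<lambda>_. 0) (\<lambda>_. 0) \<le> 0"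
    using emd_le_transport_cost by (fastforce simp: transport_cost_def)
  moreover have "0 \<le> emd l (\<lambda>_. 0) (\<lambda>_. 0)"
    using lipschitz_pairing_le_emd[of l "\<lambda>_. 0" "\<lambda>_. 0" "\<lambda>_. 0"] by (simp add: grid_dist_nonneg)
  ultimately show ?thesis by simp
qed

lemma emd_norm_le_l1_grid: "emd_norm l v \<le> 2 * l1_grid l v"
  using emd_norm_le[OF balanced_split_trivial] by simp

lemma emd_norm_zero [simp]: "emd_norm l (\<lambda>_. 0) = 0"
  using emd_norm_le_l1_grid[of l "\<lambda>_. 0"] emd_norm_nonneg[of l "\<lambda>_. 0"]
  by (simp add: l1_grid_def)

lemma emd_norm_add_le: "emd_norm l (\<lambda>x. u x + v x) \<le> emd_norm l u + emd_norm l v"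
  unfolding emd_norm_eq_Inf[of l u] emd_norm_eq_Inf[of l v]
proof (rule le_Inf_add_Inf)
  fix a b
  assume "a \<in> {emd l p q + 2 * l1_grid l r | p q r. balanced_split l u p q r}"
    "b \<in> {emd l p q + 2 * l1_grid l r | p q r. balanced_split l v p q r}"
  then obtain p q r p' q' r' where split: "balanced_split l u p q r" "balanced_split l v p' q' r'"
    and ab: "a = emd l p q + 2 * l1_grid l r" "b = emd l p' q' + 2 * l1_grid l r'"
    by blast
  have "p x + p' x - (q x + q' x) + (r x + r' x) = u x + v x" if "x \<in> grid l" for x
  proof -
    have "p x - q x + r x = u x" "p' x - q' x + r' x = v x"
      using split that by (auto simp: balanced_split_def)
    then show ?thesis by linarith
  qed
  then have "balanced_split l (\<lambda>x. u x + v x) (\<lambda>x. p x + p' x) (\<lambda>x. q x + q' x) (\<lambda>x. r x + r' x)"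
    using split by (auto simp: balanced_split_def sum.distrib)
  then have "emd_norm l (\<lambda>x. u x + v x)
      \<le> emd l (\<lambda>x. p x + p' x) (\<lambda>x. q x + q' x) + 2 * l1_grid l (\<lambda>x. r x + r' x)"
    by (rule emd_norm_le)
  also have "emd l (\<lambda>x. p x + p' x) (\<lambda>x. q x + q' x) \<le> emd l p q + emd l p' q'"
    using split by (intro emd_add_le) (auto simp: balanced_split_def)
  also have "l1_grid l (\<lambda>x. r x + r' x) \<le> l1_grid l r + l1_grid l r'"
    unfolding l1_grid_def sum.distrib[symmetric] by (intro sum_mono abs_triangle_ineq)
  finally show "emd_norm l (\<lambda>x. u x + v x) \<le> a + b"
    by (simp add: ab)
qed (use balanced_split_trivial in blast)+

lemma emd_norm_sum_le:
  assumes "finite A"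
  shows "emd_norm l (\<lambda>x. \<Sum>a\<in>A. f a x) \<le> (\<Sum>a\<in>A. emd_norm l (f a))"
  using assms
proof (induction A rule: finite_induct)
  case (insert a A)
  have "emd_norm l (\<lambda>x. \<Sum>b\<in>insert a A. f b x) = emd_norm l (\<lambda>x. f a x + (\<Sum>b\<in>A. f b x))"
    using insert.hyps by simp
  also have "\<dots> \<le> emd_norm l (f a) + emd_norm l (\<lambda>x. \<Sum>b\<in>A. f b x)"
    by (rule emd_norm_add_le)
  finally show ?case using insert by simp
qed simp

lemma emd_norm_point_mass_le: "emd_norm l (\<lambda>x. if x = z then a else 0) \<le> 2 * \<bar>a\<bar>"
proof -
  have "emd_norm l (\<lambda>x. if x = z then a else 0) \<le> 2 * l1_grid l (\<lambda>x. if x = z then a else 0)"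
    by (rule emd_norm_le_l1_grid)
  also have "l1_grid l (\<lambda>x. if x = z then a else 0) = (\<Sum>x\<in>grid l. if x = z then \<bar>a\<bar> else 0)"
    unfolding l1_grid_def by (intro sum.cong) auto
  also have "\<dots> \<le> \<bar>a\<bar>"
    by simp
  finally show ?thesis by simp
qed

lemma emd_norm_dipole_le_nonneg:
  assumes "y \<in> grid l" "z \<in> grid l" "a \<ge> 0"
  shows "emd_norm l (\<lambda>x. (if x = y then a else 0) - (if x = z then a else 0)) \<le> a * grid_dist l y z"
proof -
  define p where "p = (\<lambda>x. if x = y then a else 0)"
  define q where "q = (\<lambda>x. if x = z then a else 0)"
  define \<gamma> where "\<gamma> = (\<lambda>w. if w = (y, z) then a else 0)"
  have "coupling l p q \<gamma>"
    using assms by (auto simp: coupling_def p_def q_def \<gamma>_def)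
  then have "emd l p q \<le> transport_cost l \<gamma>"
    by (rule emd_le_transport_cost)
  also have "transport_cost l \<gamma> = (\<Sum>w\<in>grid l \<times> grid l. if w = (y, z) then a * grid_dist l y z else 0)"
    unfolding transport_cost_def \<gamma>_def by (intro sum.cong) auto
  also have "\<dots> = a * grid_dist l y z"
    using assms by simp
  finally have "emd l p q \<le> a * grid_dist l y z" .
  moreover have "balanced_split l (\<lambda>x. p x - q x) p q (\<lambda>_. 0)"
    using assms by (auto simp: balanced_split_def p_def q_def)
  ultimately show ?thesis
    using emd_norm_le[of l "\<lambda>x. p x - q x" p q "\<lambda>_. 0"] by (simp add: l1_grid_def p_def q_def)
qed

lemma emd_norm_dipole_le:
  assumes "y \<in> grid l" "z \<in> grid l"
  shows "emd_norm l (\<lambda>x. (if x = y then a else 0) - (if x = z then a else 0)) \<le> \<bar>a\<bar> * grid_dist l y z"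
proof (cases "a \<ge> 0")
  case False
  have "emd_norm l (\<lambda>x. (if x = y then a else 0) - (if x = z then a else 0))
      = emd_norm l (\<lambda>x. (if x = z then - a else 0) - (if x = y then - a else 0))"
    by (rule emd_norm_cong) auto
  also have "\<dots> \<le> - a * grid_dist l z y"
    using assms False by (intro emd_norm_dipole_le_nonneg) auto
  finally show ?thesis using False by (simp add: grid_dist_commute)
qed (use emd_norm_dipole_le_nonneg[OF assms] in auto)

section \<open>The quadtree embedding\<close>

definition corner :: "nat \<Rightarrow> cell \<Rightarrow> point" where
  "corner l c = (case c of (i, a, b) \<Rightarrow> (a * 2^(l - i), b * 2^(l - i)))"

lemma corner_in_grid:
  assumes "c \<in> cells i" "i \<le> l"
  shows "corner l c \<in> grid l"
proof -
  obtain a b where c: "c = (i, a, b)" "a < 2^i" "b < 2^i"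
    using assms(1) by (auto simp: cells_def)
  have "(2::nat)^l = 2^i * 2^(l - i)"
    using assms(2) by (simp flip: power_add)
  then show ?thesis using c by (simp add: corner_def grid_def)
qed

lemma corner_root [simp]: "corner l root = (0, 0)"
  by (simp add: corner_def root_def)

lemma corner_eq_iff_top: "c \<in> cells l \<Longrightarrow> corner l c = x \<longleftrightarrow> c = (l, fst x, snd x)"
  by (auto simp: cells_def corner_def)

lemma grid_dist_corner_parent:
  assumes "c \<in> cells (Suc i)" "i < l"
  shows "grid_dist l (corner l c) (corner l (parent c)) \<le> 1 / 2^i"
proof -
  obtain a b where c: "c = (Suc i, a, b)"
    using assms(1) by (auto simp: cells_def)
  define D :: nat where "D = 2^(l - Suc i)"
  have D2: "(2::nat)^(l - i) = 2 * D"
    using assms(2) by (simp add: D_def Suc_diff_Suc flip: power_Suc)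
  have coord: "\<bar>real (u * D) - real (u div 2 * (2 * D))\<bar> \<le> real D" for u
  proof -
    have "u * D = u div 2 * (2 * D) + u mod 2 * D"
      by (metis div_mult_mod_eq distrib_right mult.assoc mult.commute)
    then have "real (u * D) = real (u div 2 * (2 * D)) + real (u mod 2 * D)"
      by (metis of_nat_add)
    moreover have "u mod 2 * D \<le> 1 * D" by (intro mult_right_mono) auto
    then have "real (u mod 2 * D) \<le> real D" by (simp only: of_nat_le_iff mult_1)
    ultimately show ?thesis unfolding abs_le_iff by linarith
  qed
  have "grid_dist l (corner l c) (corner l (parent c)) \<le> (real D + real D) / 2^l"
    unfolding grid_dist_def using coord[of a] coord[of b]
    by (intro divide_right_mono) (simp_all add: corner_def parent_def c D2 D_def[symmetric])
  also have "(2::real)^l = 2^i * (2 * real D)"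
    using assms(2) D2 by (metis le_add_diff_inverse less_imp_le of_nat_numeral of_nat_mult
        of_nat_power power_add)
  finally show ?thesis by (simp add: D_def)
qed

definition corner_mass :: "nat \<Rightarrow> (point \<Rightarrow> real) \<Rightarrow> nat \<Rightarrow> point \<Rightarrow> real" where
  "corner_mass l v i x = (\<Sum>c\<in>cells i. if x = corner l c then Pi_vec l v c else 0)"

lemma corner_mass_top:
  assumes "x \<in> grid l"
  shows "corner_mass l v l x = v x"
proof -
  obtain a b where x: "x = (a, b)" by (cases x)
  have top: "(l, a, b) \<in> cells l"
    using assms by (auto simp: x grid_def cells_def)
  have "corner_mass l v l x = (\<Sum>c\<in>cells l. if c = (l, a, b) then Pi_vec l v c else 0)"
    unfolding corner_mass_def by (intro sum.cong refl) (metis corner_eq_iff_top fst_conv snd_conv x)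
  also have "\<dots> = Pi_vec l v (l, a, b)"
    using top by simp
  also have "\<dots> = (\<Sum>p\<in>{p\<in>grid l. cell_of l l p = (l, a, b)}. v p)"
    by (rule Pi_vec_eq_sum[OF top])
  also have "{p\<in>grid l. cell_of l l p = (l, a, b)} = {x}"
    using assms by (auto simp: x cell_of_def prod_eq_iff)
  finally show ?thesis by simp
qed

lemma corner_mass_0: "corner_mass l v 0 x = (if x = (0, 0) then Pi_vec l v root else 0)"
  by (simp add: corner_mass_def cells_0)

lemma corner_mass_parent:
  assumes "i < l"
  shows "(\<Sum>c\<in>cells (Suc i). if x = corner l (parent c) then Pi_vec l v c else 0) = corner_mass l v i x"
proof -
  have "(\<Sum>c\<in>cells (Suc i). if x = corner l (parent c) then Pi_vec l v c else 0)
      = (\<Sum>c'\<in>cells i. \<Sum>c\<in>{c\<in>cells (Suc i). parent c = c'}. if x = corner l c' then Pi_vec l v c else 0)"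
    by (subst sum.group[symmetric, of _ _ parent]) (auto simp: parent_in_cells intro!: sum.cong)
  also have "\<dots> = corner_mass l v i x"
    unfolding corner_mass_def
  proof (intro sum.cong refl)
    fix c' assume "c' \<in> cells i"
    then have "(\<Sum>c\<in>children i {c'}. Pi_vec l v c) = Pi_vec l v c'"
      using sum_Pi_vec_children[of "{c'}" i l v] assms by simp
    then show "(\<Sum>c\<in>{c\<in>cells (Suc i). parent c = c'}. if x = corner l c' then Pi_vec l v c else 0)
        = (if x = corner l c' then Pi_vec l v c' else 0)"
      by (simp add: children_def)
  qed
  finally show ?thesis .
qed

lemma quadtree_decomposition:
  assumes "x \<in> grid l"
  shows "v x = (if x = (0, 0) then Pi_vec l v root else 0)
    + (\<Sum>i<l. \<Sum>c\<in>cells (Suc i).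
         (if x = corner l c then Pi_vec l v c else 0) - (if x = corner l (parent c) then Pi_vec l v c else 0))"
proof -
  have "(\<Sum>i<l. \<Sum>c\<in>cells (Suc i).
         (if x = corner l c then Pi_vec l v c else 0) - (if x = corner l (parent c) then Pi_vec l v c else 0))
      = (\<Sum>i<l. corner_mass l v (Suc i) x - corner_mass l v i x)"
    using corner_mass_parent by (simp add: sum_subtractf corner_mass_def)
  also have "\<dots> = v x - (if x = (0, 0) then Pi_vec l v root else 0)"
    using assms sum_lessThan_telescope[of "\<lambda>i. corner_mass l v i x" l]
    by (simp add: corner_mass_top corner_mass_0)
  finally show ?thesis by simp
qed

lemma emd_norm_le_quadtree: "emd_norm l v \<le> 2 * l1_cells l (P_vec l v)"
proof -
  define dipole where "dipole c x =
      (if x = corner l c then Pi_vec l v c else 0) - (if x = corner l (parent c) then Pi_vec l v c else 0)"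
    for c x
  have root: "emd_norm l (\<lambda>x. if x = (0, 0) then Pi_vec l v root else 0) \<le> 2 * \<bar>P_vec l v root\<bar>"
    using emd_norm_point_mass_le[of l "(0, 0)" "Pi_vec l v root"] by (simp add: P_vec_def level_def root_def)
  have dipoles: "emd_norm l (dipole c) \<le> 2 * \<bar>P_vec l v c\<bar>" if "c \<in> cells (Suc i)" "i < l" for i c
  proof -
    have "emd_norm l (dipole c) \<le> \<bar>Pi_vec l v c\<bar> * grid_dist l (corner l c) (corner l (parent c))"
      unfolding dipole_def using that
      by (intro emd_norm_dipole_le corner_in_grid[of _ "Suc i"] corner_in_grid[of _ i] parent_in_cells) auto
    also have "\<dots> \<le> \<bar>Pi_vec l v c\<bar> * (1 / 2^i)"
      using that by (intro mult_left_mono grid_dist_corner_parent) auto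
    finally show ?thesis
      using that by (simp add: P_vec_def level_of_mem_cells abs_divide)
  qed
  have "emd_norm l v = emd_norm l (\<lambda>x. (if x = (0, 0) then Pi_vec l v root else 0)
      + (\<Sum>i<l. \<Sum>c\<in>cells (Suc i). dipole c x))"
    unfolding dipole_def by (rule emd_norm_cong) (rule quadtree_decomposition)
  also have "\<dots> \<le> emd_norm l (\<lambda>x. if x = (0, 0) then Pi_vec l v root else 0)
      + emd_norm l (\<lambda>x. \<Sum>i<l. \<Sum>c\<in>cells (Suc i). dipole c x)"
    by (rule emd_norm_add_le)
  also have "emd_norm l (\<lambda>x. \<Sum>i<l. \<Sum>c\<in>cells (Suc i). dipole c x)
      \<le> (\<Sum>i<l. emd_norm l (\<lambda>x. \<Sum>c\<in>cells (Suc i). dipole c x))"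
    by (rule emd_norm_sum_le) simp
  also have "\<dots> \<le> (\<Sum>i<l. \<Sum>c\<in>cells (Suc i). emd_norm l (dipole c))"
    by (intro sum_mono emd_norm_sum_le) simp
  also have "\<dots> \<le> (\<Sum>i<l. \<Sum>c\<in>cells (Suc i). 2 * \<bar>P_vec l v c\<bar>)"
    using dipoles by (intro sum_mono) auto
  finally have "emd_norm l v \<le> 2 * \<bar>P_vec l v root\<bar> + (\<Sum>i<l. \<Sum>c\<in>cells (Suc i). 2 * \<bar>P_vec l v c\<bar>)"
    using root by linarith
  also have "\<dots> = 2 * l1_cells l (P_vec l v)"
    using sum_all_cells_diff[where X="{}" and h="\<lambda>c. \<bar>P_vec l v c\<bar>" and l=l]
    by (simp add: l1_cells_def sum_distrib_left lessThan_Suc_atMost[symmetric] sum.lessThan_Suc_shift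
        cells_0 del: sum.lessThan_Suc)
  finally show ?thesis .
qed

section \<open>Trees around a sparse support\<close>

definition near :: "nat \<Rightarrow> nat \<Rightarrow> cell \<Rightarrow> point \<Rightarrow> bool" where
  "near l K c z \<longleftrightarrow> (case c of (i, a, b) \<Rightarrow>
      \<bar>int a - int (fst z div 2^(l - i))\<bar> \<le> int K \<and> \<bar>int b - int (snd z div 2^(l - i))\<bar> \<le> int K)"

definition near_tree :: "nat \<Rightarrow> nat \<Rightarrow> point set \<Rightarrow> cell set" where
  "near_tree l K Z = {c\<in>all_cells l. \<exists>z\<in>Z. near l K c z}"

lemma card_near_tree_level:
  assumes "finite Z"
  shows "card (near_tree l K Z \<inter> cells i) \<le> card Z * (2 * K + 1)^2"
proof -
  define box where "box z = (\<lambda>(a, b). (i, a, b)) `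
      ({fst z div 2^(l - i) - K .. fst z div 2^(l - i) + K} \<times> {snd z div 2^(l - i) - K .. snd z div 2^(l - i) + K})"
    for z
  have card_box: "card (box z) \<le> (2 * K + 1)^2" for z
  proof -
    have interval: "card {u - K .. u + K} \<le> 2 * K + 1" for u :: nat
      by simp
    have "card (box z) \<le> card ({fst z div 2^(l - i) - K .. fst z div 2^(l - i) + K}
        \<times> {snd z div 2^(l - i) - K .. snd z div 2^(l - i) + K})"
      unfolding box_def by (rule card_image_le) simp
    also have "\<dots> \<le> (2 * K + 1) * (2 * K + 1)"
      unfolding card_cartesian_product by (intro mult_le_mono interval)
    finally show ?thesis by (simp add: power2_eq_square)
  qed
  have "near_tree l K Z \<inter> cells i \<subseteq> (\<Union>z\<in>Z. box z)"
  proof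
    fix c assume "c \<in> near_tree l K Z \<inter> cells i"
    then obtain a b z where "c = (i, a, b)" "z \<in> Z" "near l K c z"
      by (auto simp: near_tree_def cells_def)
    then show "c \<in> (\<Union>z\<in>Z. box z)"
      unfolding box_def near_def by (intro UN_I[of z]) (auto simp: image_iff)
  qed
  then have "card (near_tree l K Z \<inter> cells i) \<le> card (\<Union>z\<in>Z. box z)"
    by (rule card_mono[rotated]) (simp add: assms box_def)
  also have "\<dots> \<le> (\<Sum>z\<in>Z. card (box z))"
    by (rule card_UN_le[OF assms])
  also have "\<dots> \<le> card Z * (2 * K + 1)^2"
    using sum_mono[of Z "\<lambda>z. card (box z)" "\<lambda>_. (2 * K + 1)^2"] card_box by simp
  finally show ?thesis .
qed

lemma near_parent:
  assumes "near l K c z" "c \<in> cells (Suc i)" "i < l"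
  shows "near l K (parent c) z"
proof -
  obtain a b where c: "c = (Suc i, a, b)"
    using assms(2) by (auto simp: cells_def)
  define x y where "x = fst z div 2^(l - Suc i)" and "y = snd z div 2^(l - Suc i)"
  have "l - i = Suc (l - Suc i)"
    using assms(3) by simp
  then have "(2::nat)^(l - i) = 2^(l - Suc i) * 2"
    by simp
  then have coarse: "fst z div 2^(l - i) = x div 2" "snd z div 2^(l - i) = y div 2"
    by (simp_all add: x_def y_def div_mult2_eq)
  have "\<bar>int a - int x\<bar> \<le> int K" "\<bar>int b - int y\<bar> \<le> int K"
    using assms(1) by (simp_all add: near_def c x_def y_def)
  then have "\<bar>int (a div 2) - int (x div 2)\<bar> \<le> int K" "\<bar>int (b div 2) - int (y div 2)\<bar> \<le> int K"
    by linarith+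
  then show ?thesis
    by (simp add: near_def parent_def c coarse)
qed

lemma near_tree_in_trees:
  assumes "finite Z" "(0, 0) \<in> Z" "card Z * (2 * K + 1)^2 \<le> w"
  shows "near_tree l K Z \<in> trees l w"
proof -
  have "root \<in> all_cells l"
    using cells_0 by (auto simp: all_cells_def)
  moreover have "near l K root (0, 0)"
    by (simp add: near_def root_def)
  ultimately have "root \<in> near_tree l K Z"
    using assms(2) by (auto simp: near_tree_def)
  moreover have "parent c \<in> near_tree l K Z" if c: "c \<in> near_tree l K Z" "level c > 0" for c
  proof -
    obtain j where j: "c \<in> cells j" "j \<le> l"
      using c(1) by (auto simp: near_tree_def all_cells_def)
    moreover have "j > 0"
      using c(2) j(1) by (simp add: level_of_mem_cells)
    ultimately obtain i where i: "c \<in> cells (Suc i)" "i < l"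
      by (metis Suc_le_lessD gr0_implies_Suc)
    obtain z where "z \<in> Z" "near l K c z"
      using c(1) by (auto simp: near_tree_def)
    then have "near l K (parent c) z"
      using near_parent i by blast
    moreover have "parent c \<in> all_cells l"
      using parent_in_cells[OF i(1)] i(2) by (auto simp: all_cells_def)
    ultimately show ?thesis
      using \<open>z \<in> Z\<close> by (auto simp: near_tree_def)
  qed
  moreover have "card (near_tree l K Z \<inter> cells i) \<le> w" for i
    using card_near_tree_level[OF assms(1), of l K i] assms(3) by linarith
  moreover have "near_tree l K Z \<subseteq> all_cells l"
    by (auto simp: near_tree_def)
  ultimately show ?thesis
    unfolding trees_def by blast
qed

lemma real_dist_gt_of_div_gt:
  fixes x y D K :: nat
  assumes "D > 0" "y div D + K < x div D"
  shows "real K * real D < real x - real y"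
proof -
  have "D * (x div D) \<le> x"
    by (simp add: times_div_less_eq_dividend)
  moreover have "y < D * (y div D) + D"
    using assms(1) by (metis add.commute div_mult_mod_eq mod_less_divisor mult.commute
        nat_add_left_cancel_less)
  moreover have "D * (y div D) + D * K + D \<le> D * (x div D)"
    using assms(2) mult_le_mono2[of "y div D + K + 1" "x div D" D] by (simp add: algebra_simps)
  ultimately have "D * K + y < x"
    by linarith
  then have "real (D * K + y) < real x"
    by (simp only: of_nat_less_iff)
  then show ?thesis by (simp add: algebra_simps)
qed

lemma real_dist_gt_of_div_dist_gt:
  fixes x y D K :: nat
  assumes "D > 0" "int K < \<bar>int (x div D) - int (y div D)\<bar>"
  shows "real K * real D < \<bar>real x - real y\<bar>"
proof (cases "y div D \<le> x div D")
  case True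
  then have "real K * real D < real x - real y"
    using assms by (intro real_dist_gt_of_div_gt) linarith+
  then show ?thesis by linarith
next
  case False
  then have "real K * real D < real y - real x"
    using assms by (intro real_dist_gt_of_div_gt) linarith+
  then show ?thesis by linarith
qed

lemma grid_dist_gt_of_not_near:
  assumes "i \<le> l" "\<not> near l K (cell_of l i p) z"
  shows "real K / 2^i < grid_dist l p z"
proof -
  define D :: nat where "D = 2^(l - i)"
  have "int K < \<bar>int (fst p div D) - int (fst z div D)\<bar> \<or> int K < \<bar>int (snd p div D) - int (snd z div D)\<bar>"
    using assms(2) by (auto simp: near_def cell_of_def D_def)
  then have "real K * real D < \<bar>real (fst p) - real (fst z)\<bar> \<or>
      real K * real D < \<bar>real (snd p) - real (snd z)\<bar>"
    using real_dist_gt_of_div_dist_gt[of D K] by (auto simp: D_def)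
  then have "real K * real D < \<bar>real (fst p) - real (fst z)\<bar> + \<bar>real (snd p) - real (snd z)\<bar>"
    by (smt (verit))
  then have "real K * real D / 2^l < grid_dist l p z"
    unfolding grid_dist_def by (intro divide_strict_right_mono) auto
  moreover have "(2::real)^l = 2^i * real D"
    using assms(1) by (simp add: D_def flip: power_add)
  ultimately show ?thesis by (simp add: D_def)
qed

definition dist_to :: "nat \<Rightarrow> point set \<Rightarrow> point \<Rightarrow> real" where
  "dist_to l Z p = Min (grid_dist l p ` Z)"

lemma dist_to_nonneg: "finite Z \<Longrightarrow> Z \<noteq> {} \<Longrightarrow> dist_to l Z p \<ge> 0"
  by (simp add: dist_to_def grid_dist_nonneg)

lemma dist_to_le: "finite Z \<Longrightarrow> z \<in> Z \<Longrightarrow> dist_to l Z p \<le> grid_dist l p z"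
  unfolding dist_to_def by (rule Min_le) auto

lemma dist_to_eq_0: "finite Z \<Longrightarrow> p \<in> Z \<Longrightarrow> dist_to l Z p = 0"
  using dist_to_le[of Z p l p] dist_to_nonneg[of Z l p] by auto

lemma dist_to_le_2:
  assumes "finite Z" "(0, 0) \<in> Z" "p \<in> grid l"
  shows "dist_to l Z p \<le> 2"
proof -
  have "fst p + snd p \<le> 2 * 2^l"
    using assms(3) by (auto simp: grid_def)
  then have "real (fst p + snd p) \<le> real (2 * 2^l)"
    by (simp only: of_nat_le_iff)
  then have "grid_dist l p (0, 0) \<le> 2"
    by (simp add: grid_dist_def divide_le_eq)
  then show ?thesis
    using dist_to_le[OF assms(1,2)] order_trans by blast
qed

lemma dist_to_lipschitz:
  assumes "finite Z" "Z \<noteq> {}"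
  shows "dist_to l Z x - dist_to l Z y \<le> grid_dist l x y"
proof -
  have "dist_to l Z y \<in> grid_dist l y ` Z"
    unfolding dist_to_def using assms by (intro Min_in) auto
  then obtain z where z: "z \<in> Z" "dist_to l Z y = grid_dist l y z"
    by blast
  have "dist_to l Z x \<le> grid_dist l x y + grid_dist l y z"
    using dist_to_le[OF assms(1) z(1)] grid_dist_triangle order_trans by blast
  then show ?thesis using z by linarith
qed

lemma dist_to_gt_of_not_near_tree:
  assumes "finite Z" "Z \<noteq> {}" "p \<in> grid l" "i \<le> l" "cell_of l i p \<notin> near_tree l K Z"
  shows "real K / 2^i < dist_to l Z p"
proof -
  have "cell_of l i p \<in> all_cells l"
    using cell_of_in_cells[OF assms(3,4)] assms(4) by (auto simp: all_cells_def)
  then have "\<not> near l K (cell_of l i p) z" if "z \<in> Z" for z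
    using assms(5) that by (auto simp: near_tree_def)
  then show ?thesis
    using assms(1,2,4) grid_dist_gt_of_not_near by (simp add: dist_to_def)
qed

lemma sum_inverse_powers_below_le:
  fixes t :: real
  shows "(\<Sum>i | i \<le> n \<and> 1 / 2^i < t. 1 / 2^i :: real) \<le> max 0 (2 * t - 1 / 2^n)"
proof (induction n)
  case 0
  then show ?case
    by (cases "1 < t") (simp_all add: Collect_conv_if)
next
  case (Suc n)
  show ?case
  proof (cases "1 / 2^Suc n < t")
    case True
    then have "{i. i \<le> Suc n \<and> 1 / 2^i < t} = insert (Suc n) {i. i \<le> n \<and> 1 / 2^i < t}"
      by (auto simp: le_Suc_eq)
    then have "(\<Sum>i | i \<le> Suc n \<and> 1 / 2^i < t. 1 / 2^i :: real)
        = 1 / 2^Suc n + (\<Sum>i | i \<le> n \<and> 1 / 2^i < t. 1 / 2^i)"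
      by simp
    also have "\<dots> \<le> 1 / 2^Suc n + max 0 (2 * t - 2 * (1 / 2^Suc n))"
      using Suc.IH by simp
    also have "\<dots> \<le> max 0 (2 * t - 1 / 2^Suc n)"
      using True by (simp add: max_def)
    finally show ?thesis .
  next
    case False
    have "\<not> 1 / 2^i < t" if "i \<le> Suc n" for i
    proof -
      have "1 / 2^Suc n \<le> (1::real) / 2^i"
        using that by (intro divide_left_mono power_increasing) auto
      then show ?thesis using False by linarith
    qed
    then have none: "{i. i \<le> Suc n \<and> 1 / 2^i < t} = {}"
      by auto
    show ?thesis unfolding none by simp
  qed
qed

text \<open>The level-\<open>i\<close> cell of \<open>p\<close> lies outside the near tree only if
  \<open>K / 2^i < dist_to l Z p\<close>, so the weights \<open>1 / 2^i\<close> of those levels sum to at most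
  \<open>2 * dist_to l Z p / K\<close>.\<close>

lemma tail_outside_near_tree_le:
  assumes s: "\<forall>p\<in>grid l. s p \<ge> 0" and K: "K \<ge> 1" and Z: "finite Z" "Z \<noteq> {}"
  shows "(\<Sum>c\<in>all_cells l - near_tree l K Z. P_vec l s c) \<le> 2 / real K * (\<Sum>p\<in>grid l. dist_to l Z p * s p)"
proof -
  define far where "far p = {i. i \<le> l \<and> cell_of l i p \<notin> near_tree l K Z}" for p
  have far_sum: "(\<Sum>i\<in>far p. 1 / 2^i :: real) \<le> 2 / real K * dist_to l Z p" if p: "p \<in> grid l" for p
  proof -
    have "far p \<subseteq> {i. i \<le> l \<and> 1 / 2^i < dist_to l Z p / real K}"
      using dist_to_gt_of_not_near_tree[OF Z p] K by (auto simp: far_def field_simps)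
    then have "(\<Sum>i\<in>far p. 1 / 2^i :: real) \<le> (\<Sum>i | i \<le> l \<and> 1 / 2^i < dist_to l Z p / real K. 1 / 2^i)"
      by (intro sum_mono2) auto
    also have "\<dots> \<le> max 0 (2 * (dist_to l Z p / real K) - 1 / 2^l)"
      by (rule sum_inverse_powers_below_le)
    also have "\<dots> \<le> 2 * (dist_to l Z p / real K)"
      using dist_to_nonneg[OF Z, of l p] by simp
    finally show ?thesis by simp
  qed
  have "(\<Sum>c\<in>all_cells l - near_tree l K Z. P_vec l s c)
      = (\<Sum>i\<le>l. (\<Sum>p\<in>{p\<in>grid l. cell_of l i p \<in> cells i - near_tree l K Z}. s p) / 2^i)"
    unfolding sum_all_cells_diff by (intro sum.cong refl sum_P_vec) auto
  also have "\<dots> = (\<Sum>i\<le>l. \<Sum>p\<in>grid l. if i \<in> far p then s p / 2^i else 0)"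
    by (intro sum.cong refl)
      (auto simp: sum_divide_distrib sum.inter_filter far_def cell_of_in_cells intro!: sum.cong)
  also have "\<dots> = (\<Sum>p\<in>grid l. s p * (\<Sum>i\<in>far p. 1 / 2^i))"
    by (subst sum.swap) (simp add: sum_distrib_left sum.inter_filter[symmetric] far_def atMost_def)
  also have "\<dots> \<le> (\<Sum>p\<in>grid l. s p * (2 / real K * dist_to l Z p))"
    using s far_sum by (intro sum_mono mult_left_mono) auto
  also have "\<dots> = 2 / real K * (\<Sum>p\<in>grid l. dist_to l Z p * s p)"
    by (simp add: sum_distrib_left algebra_simps)
  finally show ?thesis .
qed

lemma dist_to_pairing_le_emd_norm:
  assumes "finite Z" "(0, 0) \<in> Z" "{p\<in>grid l. s' p \<noteq> 0} \<subseteq> Z"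
  shows "(\<Sum>p\<in>grid l. dist_to l Z p * s p) \<le> emd_norm l (\<lambda>p. s p - s' p)"
proof -
  have "Z \<noteq> {}" using assms(2) by blast
  have "(\<Sum>p\<in>grid l. dist_to l Z p * s p) = (\<Sum>p\<in>grid l. dist_to l Z p * (s p - s' p))"
    using assms(3) by (intro sum.cong) (auto simp: dist_to_eq_0[OF assms(1)])
  also have "\<dots> \<le> emd_norm l (\<lambda>p. s p - s' p)"
    using dist_to_lipschitz[OF assms(1) \<open>Z \<noteq> {}\<close>] dist_to_nonneg[OF assms(1) \<open>Z \<noteq> {}\<close>]
      dist_to_le_2[OF assms(1,2)]
    by (intro lipschitz_pairing_le_emd_norm) auto
  finally show ?thesis .
qed

section \<open>The model and the greedy run\<close>

lemma restrict_P_vec_in_model: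
  assumes s: "\<forall>p\<in>grid l. s p \<ge> 0" and T: "T \<in> trees l w"
  shows "(\<lambda>c. if c \<in> T then P_vec l s c else 0) \<in> model l w"
proof -
  define y where "y c = (if c \<in> T then P_vec l s c else 0)" for c
  have "y c \<ge> 2 * (\<Sum>c'\<in>{c'\<in>all_cells l. is_child c' c}. y c')"
    if c: "c \<in> all_cells l" "level c < l" for c
  proof -
    obtain i where i: "c \<in> cells i" "i < l"
      using c by (auto simp: all_cells_def level_of_mem_cells)
    show ?thesis
    proof (cases "c \<in> T")
      case True
      have "(\<Sum>c'\<in>children i {c}. y c') \<le> (\<Sum>c'\<in>children i {c}. P_vec l s c')"
        using P_vec_nonneg[OF s] by (intro sum_mono) (simp add: y_def)
      also have "\<dots> = P_vec l s c / 2"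
        using sum_P_vec_children[of "{c}" i l s] i by simp
      finally show ?thesis
        using True i by (simp add: children_eq y_def)
    next
      case False
      have "c' \<notin> T" if "c' \<in> children i {c}" for c'
        using False T that i(1) by (auto simp: trees_def children_def level_of_mem_cells)
      then show ?thesis
        using False i by (simp add: children_eq y_def)
    qed
  qed
  moreover have "\<forall>c\<in>all_cells l. y c \<ge> 0"
    using P_vec_nonneg[OF s] by (simp add: y_def)
  moreover have "\<forall>c\<in>all_cells l. y c \<noteq> 0 \<longrightarrow> c \<in> T"
    by (simp add: y_def)
  ultimately show ?thesis
    using T unfolding model_def y_def by blast
qed

lemma tail_le_l1_cells:
  assumes "\<forall>p\<in>grid l. s p \<ge> 0" "\<forall>c\<in>all_cells l. y c \<noteq> 0 \<longrightarrow> c \<in> T"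
  shows "(\<Sum>c\<in>all_cells l - T. P_vec l s c) \<le> l1_cells l (\<lambda>c. P_vec l s c - y c)"
proof -
  have "(\<Sum>c\<in>all_cells l - T. P_vec l s c) = (\<Sum>c\<in>all_cells l - T. \<bar>P_vec l s c - y c\<bar>)"
    using assms P_vec_nonneg by (intro sum.cong) auto
  also have "\<dots> \<le> l1_cells l (\<lambda>c. P_vec l s c - y c)"
    unfolding l1_cells_def by (intro sum_mono2) auto
  finally show ?thesis .
qed

lemma l1_cells_restrict_P_vec:
  assumes "\<forall>p\<in>grid l. s p \<ge> 0"
  shows "l1_cells l (\<lambda>c. P_vec l s c - (if c \<in> T then P_vec l s c else 0))
    = (\<Sum>c\<in>all_cells l - T. P_vec l s c)"
proof -
  have "l1_cells l (\<lambda>c. P_vec l s c - (if c \<in> T then P_vec l s c else 0))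
      = (\<Sum>c\<in>all_cells l. if c \<in> T then 0 else P_vec l s c)"
    unfolding l1_cells_def using assms P_vec_nonneg by (intro sum.cong) auto
  then show ?thesis
    by (simp add: sum.If_cases Diff_eq)
qed

lemma sum_le_sum_max_of_card_le:
  fixes f :: "'a \<Rightarrow> real"
  assumes "finite B" "card M \<le> card B" "\<forall>m\<in>M. \<forall>b\<in>B. f m \<le> f b"
  shows "sum f M \<le> (\<Sum>b\<in>B. max 0 (f b))"
proof (cases "finite M")
  case True
  obtain g where g: "g ` M \<subseteq> B" "inj_on g M"
    using card_le_inj[OF True assms(1,2)] by blast
  have "sum f M \<le> (\<Sum>m\<in>M. max 0 (f (g m)))"
    using g(1) assms(3) by (intro sum_mono) (auto intro: max.coboundedI2)
  also have "\<dots> = (\<Sum>b\<in>g ` M. max 0 (f b))"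
    by (simp add: sum.reindex g(2))
  also have "\<dots> \<le> (\<Sum>b\<in>B. max 0 (f b))"
    using g(1) assms(1) by (intro sum_mono2) auto
  finally show ?thesis .
qed (simp add: sum_nonneg)

text \<open>Exchange argument for a greedy top-\<open>w\<close> selection \<open>S\<close> of \<open>T\<close> by the noisy values
  \<open>y = f + e\<close>: the cells of a set \<open>R\<close> of width at most \<open>w\<close> that were not selected can be
  matched injectively with selected cells outside \<open>R\<close>, whose values are at least as large.\<close>

lemma greedy_selection_bound:
  fixes f e y :: "'a \<Rightarrow> real"
  assumes A: "finite A" "T \<subseteq> A" and S: "S \<subseteq> T" "card S = min w (card T)"
    and greedy: "\<forall>c\<in>S. \<forall>c'\<in>T - S. y c' \<le> y c"
    and R: "card (R \<inter> A) \<le> w"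
    and y: "\<forall>c\<in>A. y c = f c + e c" and f: "\<forall>c\<in>A. f c \<ge> 0"
  shows "(\<Sum>c\<in>T - S. f c) \<le> (\<Sum>c\<in>A - R. f c) + (\<Sum>c\<in>(R \<inter> A - S) \<union> S. \<bar>e c\<bar>)"
proof -
  define M where "M = (T - S) \<inter> R"
  define B where "B = S - R"
  have "finite T"
    by (rule finite_subset[OF A(2,1)])
  then have fin: "finite T" "finite S" "finite M" "finite B"
    using finite_subset[OF S(1)] by (auto simp: M_def B_def)
  have "card M \<le> card B"
  proof (cases "S = T")
    case False
    then have "card S < card T"
      using S(1) fin(1) by (intro psubset_card_mono) auto
    then have "card S = w"
      using S(2) by (simp add: min_def split: if_splits)
    have "card M + card (S \<inter> R) \<le> card (R \<inter> A)"
      using A S(1) fin by (subst card_Un_disjoint[symmetric]) (auto simp: M_def intro!: card_mono)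
    also have "card S = card (S \<inter> R) + card B"
      using fin by (subst card_Un_disjoint[symmetric]) (auto simp: B_def intro!: arg_cong[of _ _ card])
    ultimately show ?thesis
      using R \<open>card S = w\<close> by linarith
  qed (simp add: M_def)
  then have "(\<Sum>c\<in>M. y c) \<le> (\<Sum>c\<in>B. max 0 (y c))"
    using fin greedy by (intro sum_le_sum_max_of_card_le) (auto simp: M_def B_def)
  moreover have "(\<Sum>c\<in>M. f c) \<le> (\<Sum>c\<in>M. y c) + (\<Sum>c\<in>M. \<bar>e c\<bar>)"
    using y A S(1) by (auto simp: M_def simp flip: sum.distrib intro!: sum_mono)
  moreover have "(\<Sum>c\<in>B. max 0 (y c)) \<le> (\<Sum>c\<in>B. f c) + (\<Sum>c\<in>B. \<bar>e c\<bar>)"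
    using y f A S(1) by (auto simp: B_def simp flip: sum.distrib intro!: sum_mono)
  moreover have "(\<Sum>c\<in>T - S. f c) = (\<Sum>c\<in>M. f c) + (\<Sum>c\<in>T - S - R. f c)"
    using fin by (subst sum.union_disjoint[symmetric]) (auto simp: M_def intro!: sum.cong)
  moreover have "(\<Sum>c\<in>B. f c) + (\<Sum>c\<in>T - S - R. f c) \<le> (\<Sum>c\<in>A - R. f c)"
    using fin A S f by (subst sum.union_disjoint[symmetric]) (auto simp: B_def intro!: sum_mono2)
  moreover have "(\<Sum>c\<in>M. \<bar>e c\<bar>) + (\<Sum>c\<in>B. \<bar>e c\<bar>) \<le> (\<Sum>c\<in>(R \<inter> A - S) \<union> S. \<bar>e c\<bar>)"
    using fin A S by (subst sum.union_disjoint[symmetric]) (auto simp: M_def B_def intro!: sum_mono2)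
  ultimately show ?thesis by linarith
qed

lemma valid_run_step:
  assumes "valid_run l w y S" "i \<in> {1..l}"
  defines "T \<equiv> {c'\<in>cells i. \<exists>c\<in>S (i - 1). is_child c' c}"
  shows "S i \<subseteq> T" "card (S i) = min w (card T)" "\<forall>c\<in>S i. \<forall>c'\<in>T - S i. y c' \<le> y c"
  using bspec[OF conjunct2[OF assms(1)[unfolded valid_run_def]] assms(2)]
  unfolding T_def Let_def by blast+

lemma valid_run_subset_cells:
  assumes "valid_run l w y S" "i \<le> l"
  shows "S i \<subseteq> cells i"
proof (cases i)
  case 0
  then show ?thesis
    using assms(1) by (simp add: valid_run_def cells_0)
next
  case (Suc j)
  then show ?thesis
    using valid_run_step(1)[OF assms(1), of i] assms(2) by auto
qed

lemma valid_run_Suc: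
  assumes "valid_run l w y S" "i < l"
  shows "S (Suc i) \<subseteq> children i (S i)" "card (S (Suc i)) = min w (card (children i (S i)))"
    "\<forall>c\<in>S (Suc i). \<forall>c'\<in>children i (S i) - S (Suc i). y c' \<le> y c"
proof -
  have "{c'\<in>cells (Suc i). \<exists>c\<in>S (Suc i - 1). is_child c' c} = children i (S i)"
    using valid_run_subset_cells[OF assms(1), of i] assms(2)
    by (auto simp: children_def is_child_def level_of_mem_cells)
  moreover have "Suc i \<in> {1..l}"
    using assms(2) by simp
  ultimately show "S (Suc i) \<subseteq> children i (S i)" "card (S (Suc i)) = min w (card (children i (S i)))"
    "\<forall>c\<in>S (Suc i). \<forall>c'\<in>children i (S i) - S (Suc i). y c' \<le> y c"
    using valid_run_step[OF assms(1), of "Suc i"] by simp_all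
qed

lemma missed_mass_Suc_le:
  assumes s: "\<forall>p\<in>grid l. s p \<ge> 0" and S: "valid_run l w y S" and i: "i < l"
  shows "(\<Sum>c\<in>cells (Suc i) - S (Suc i). P_vec l s c)
    \<le> (\<Sum>c\<in>cells i - S i. P_vec l s c) / 2 + (\<Sum>c\<in>children i (S i) - S (Suc i). P_vec l s c)"
proof -
  have "cells (Suc i) - S (Suc i) \<subseteq> children i (cells i - S i) \<union> (children i (S i) - S (Suc i))"
    by (auto simp: children_def parent_in_cells)
  then have "(\<Sum>c\<in>cells (Suc i) - S (Suc i). P_vec l s c)
      \<le> (\<Sum>c\<in>children i (cells i - S i) \<union> (children i (S i) - S (Suc i)). P_vec l s c)"
    using P_vec_nonneg[OF s] by (intro sum_mono2) (auto simp: children_def)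
  also have "\<dots> \<le> (\<Sum>c\<in>children i (cells i - S i). P_vec l s c)
      + (\<Sum>c\<in>children i (S i) - S (Suc i). P_vec l s c)"
    using P_vec_nonneg[OF s] by (simp add: sum_Un sum_nonneg)
  also have "(\<Sum>c\<in>children i (cells i - S i). P_vec l s c) = (\<Sum>c\<in>cells i - S i. P_vec l s c) / 2"
    using i by (intro sum_P_vec_children) auto
  finally show ?thesis .
qed

lemma sum_le_of_halving_recurrence:
  fixes a e :: "nat \<Rightarrow> real"
  assumes "a 0 = 0" "\<forall>i<n. a (Suc i) \<le> a i / 2 + e i" "\<forall>i\<le>n. a i \<ge> 0"
  shows "(\<Sum>i\<le>n. a i) \<le> 2 * (\<Sum>i<n. e i)"
proof -
  have strengthened: "(\<Sum>i\<le>m. a i) + a m \<le> 2 * (\<Sum>i<m. e i)" if "m \<le> n" for m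
    using that
  proof (induction m)
    case (Suc m)
    then have "a (Suc m) \<le> a m / 2 + e m"
      using assms(2) by simp
    then show ?case
      using Suc by simp
  qed (simp add: assms(1))
  from strengthened[of n] assms(3) show ?thesis
    by fastforce
qed

lemma cells_diff_Union_run:
  assumes "valid_run l w y S" "i \<le> l"
  shows "cells i - (\<Union>j\<le>l. S j) = cells i - S i"
proof
  show "cells i - (\<Union>j\<le>l. S j) \<subseteq> cells i - S i"
    using assms(2) by blast
  show "cells i - S i \<subseteq> cells i - (\<Union>j\<le>l. S j)"
  proof
    fix c assume c: "c \<in> cells i - S i"
    have "c \<notin> S j" if j: "j \<le> l" for j
    proof (cases "j = i")
      case False
      then show ?thesis
        using valid_run_subset_cells[OF assms(1) j] cells_disjoint[OF False] c by blast
    qed (use c in simp)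
    then show "c \<in> cells i - (\<Union>j\<le>l. S j)"
      using c by blast
  qed
qed

lemma lost_candidates_le:
  assumes s: "\<forall>p\<in>grid l. s p \<ge> 0" and S: "valid_run l w (y_noisy l s \<nu>) S"
    and T: "T \<in> trees l w" and i: "i < l"
  shows "(\<Sum>c\<in>children i (S i) - S (Suc i). P_vec l s c)
    \<le> (\<Sum>c\<in>cells (Suc i) - T. P_vec l s c)
      + 1 / 2^Suc i * (\<Sum>c\<in>(T \<inter> cells (Suc i) - S (Suc i)) \<union> S (Suc i). \<bar>\<nu> c\<bar>)"
proof -
  have "(\<Sum>c\<in>children i (S i) - S (Suc i). P_vec l s c)
      \<le> (\<Sum>c\<in>cells (Suc i) - T. P_vec l s c)
        + (\<Sum>c\<in>(T \<inter> cells (Suc i) - S (Suc i)) \<union> S (Suc i). \<bar>\<nu> c / 2^Suc i\<bar>)"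
  proof (rule greedy_selection_bound[where y = "y_noisy l s \<nu>"])
    show "children i (S i) \<subseteq> cells (Suc i)"
      by (auto simp: children_def)
    show "card (T \<inter> cells (Suc i)) \<le> w"
      using T i by (simp add: trees_def)
    show "\<forall>c\<in>cells (Suc i). y_noisy l s \<nu> c = P_vec l s c + \<nu> c / 2^Suc i"
      by (simp add: y_noisy_def P_vec_def level_of_mem_cells add_divide_distrib)
    show "\<forall>c\<in>cells (Suc i). 0 \<le> P_vec l s c"
      using P_vec_nonneg[OF s] by simp
  qed (use valid_run_Suc[OF S i] in simp_all)
  then show ?thesis
    by (simp add: abs_divide sum_divide_distrib)
qed

lemma missed_mass_le:
  assumes s: "\<forall>p\<in>grid l. s p \<ge> 0" and S: "valid_run l w (y_noisy l s \<nu>) S" and T: "T \<in> trees l w"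
  shows "(\<Sum>c\<in>all_cells l - (\<Union>i\<le>l. S i). P_vec l s c)
    \<le> 2 * (\<Sum>c\<in>all_cells l - T. P_vec l s c)
      + 2 * (\<Sum>i\<le>l. 1 / 2^i * (\<Sum>c\<in>(T \<inter> cells i - S i) \<union> S i. \<bar>\<nu> c\<bar>))"
proof -
  define missed where "missed i = (\<Sum>c\<in>cells i - S i. P_vec l s c)" for i
  define lost where "lost i = (\<Sum>c\<in>children i (S i) - S (Suc i). P_vec l s c)" for i
  define bound where "bound i = (\<Sum>c\<in>cells i - T. P_vec l s c)
    + 1 / 2^i * (\<Sum>c\<in>(T \<inter> cells i - S i) \<union> S i. \<bar>\<nu> c\<bar>)" for i
  have "(\<Sum>c\<in>all_cells l - (\<Union>i\<le>l. S i). P_vec l s c) = (\<Sum>i\<le>l. missed i)"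
    using cells_diff_Union_run[OF S] by (simp add: sum_all_cells_diff missed_def)
  also have "\<dots> \<le> 2 * (\<Sum>i<l. lost i)"
  proof (rule sum_le_of_halving_recurrence)
    show "missed 0 = 0"
      using S by (simp add: missed_def valid_run_def cells_0)
    show "\<forall>i<l. missed (Suc i) \<le> missed i / 2 + lost i"
      using missed_mass_Suc_le[OF s S] by (simp add: missed_def lost_def)
    show "\<forall>i\<le>l. 0 \<le> missed i"
      using P_vec_nonneg[OF s] by (simp add: missed_def sum_nonneg)
  qed
  also have "(\<Sum>i<l. lost i) \<le> (\<Sum>i<l. bound (Suc i))"
    using lost_candidates_le[OF s S T] by (intro sum_mono) (simp add: lost_def bound_def)
  also have "\<dots> \<le> (\<Sum>i\<le>l. bound i)"
  proof -
    have "0 \<le> bound 0"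
      using P_vec_nonneg[OF s] by (simp add: bound_def sum_nonneg)
    then show ?thesis
      by (simp add: lessThan_Suc_atMost[symmetric] sum.lessThan_Suc_shift del: sum.lessThan_Suc)
  qed
  finally show ?thesis
    by (simp add: bound_def sum.distrib sum_all_cells_diff)
qed

lemma emd_norm_le_l1_fit:
  assumes s: "\<forall>p\<in>grid l. s p \<ge> 0"
    and fit: "\<forall>s'. (\<forall>p\<in>grid l. s' p \<ge> 0) \<longrightarrow>
      l1_cells l (\<lambda>c. y c - P_vec l s_hat c) \<le> l1_cells l (\<lambda>c. y c - P_vec l s' c)"
  shows "emd_norm l (\<lambda>p. s p - s_hat p) \<le> 4 * l1_cells l (\<lambda>c. P_vec l s c - y c)"
proof -
  have "P_vec l (\<lambda>p. s p - s_hat p) = (\<lambda>c. P_vec l s c - P_vec l s_hat c)"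
    by (rule ext) (rule P_vec_diff)
  then have "emd_norm l (\<lambda>p. s p - s_hat p) \<le> 2 * l1_cells l (\<lambda>c. P_vec l s c - P_vec l s_hat c)"
    using emd_norm_le_quadtree[of l "\<lambda>p. s p - s_hat p"] by simp
  also have "l1_cells l (\<lambda>c. P_vec l s c - P_vec l s_hat c)
      \<le> l1_cells l (\<lambda>c. P_vec l s c - y c) + l1_cells l (\<lambda>c. y c - P_vec l s_hat c)"
    unfolding l1_cells_def sum.distrib[symmetric] by (intro sum_mono) linarith
  also have "l1_cells l (\<lambda>c. y c - P_vec l s_hat c) \<le> l1_cells l (\<lambda>c. P_vec l s c - y c)"
    using fit s by (simp add: l1_cells_def abs_minus_commute)
  finally show ?thesis by simp
qed

lemma sum_Union_level_subsets:
  assumes "\<forall>i\<le>l. S i \<subseteq> cells i"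
  shows "(\<Sum>c\<in>(\<Union>i\<le>l. S i). h c) = (\<Sum>i\<le>l. \<Sum>c\<in>S i. h c)"
proof (rule sum.UNION_disjoint)
  show "\<forall>i\<in>{..l}. finite (S i)"
  proof
    fix i assume "i \<in> {..l}"
    then have "S i \<subseteq> cells i"
      using assms by simp
    then show "finite (S i)"
      by (rule finite_subset) simp
  qed
  show "\<forall>i\<in>{..l}. \<forall>j\<in>{..l}. i \<noteq> j \<longrightarrow> S i \<inter> S j = {}"
  proof (intro ballI impI)
    fix i j assume "i \<in> {..l}" "j \<in> {..l}" "i \<noteq> j"
    then have "S i \<subseteq> cells i" "S j \<subseteq> cells j" "cells i \<inter> cells j = {}"
      using assms cells_disjoint by auto
    then show "S i \<inter> S j = {}"
      by blast
  qed
qed simp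

lemma l1_cells_sub_restricted_noisy:
  assumes s: "\<forall>p\<in>grid l. s p \<ge> 0" and S: "\<forall>i\<le>l. S i \<subseteq> cells i"
  shows "l1_cells l (\<lambda>c. P_vec l s c - (if c \<in> (\<Union>i\<le>l. S i) then y_noisy l s \<nu> c else 0))
    = (\<Sum>i\<le>l. 1 / 2^i * (\<Sum>c\<in>S i. \<bar>\<nu> c\<bar>)) + (\<Sum>c\<in>all_cells l - (\<Union>i\<le>l. S i). P_vec l s c)"
proof -
  define U where "U = (\<Union>i\<le>l. S i)"
  have U: "U \<subseteq> all_cells l"
    using S by (auto simp: U_def all_cells_def)
  have "l1_cells l (\<lambda>c. P_vec l s c - (if c \<in> U then y_noisy l s \<nu> c else 0))
      = (\<Sum>c\<in>all_cells l. if c \<in> U then \<bar>\<nu> c\<bar> / 2^level c else P_vec l s c)"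
    unfolding l1_cells_def
  proof (intro sum.cong refl)
    fix c
    have "P_vec l s c - y_noisy l s \<nu> c = - \<nu> c / 2^level c"
      by (simp add: P_vec_def y_noisy_def field_simps)
    then show "\<bar>P_vec l s c - (if c \<in> U then y_noisy l s \<nu> c else 0)\<bar>
        = (if c \<in> U then \<bar>\<nu> c\<bar> / 2^level c else P_vec l s c)"
      using P_vec_nonneg[OF s, of c] by (simp add: abs_divide)
  qed
  also have "\<dots> = (\<Sum>c\<in>U. \<bar>\<nu> c\<bar> / 2^level c) + (\<Sum>c\<in>all_cells l - U. P_vec l s c)"
    using U by (simp add: sum.If_cases Diff_eq Int_absorb1)
  also have "(\<Sum>c\<in>U. \<bar>\<nu> c\<bar> / 2^level c) = (\<Sum>i\<le>l. 1 / 2^i * (\<Sum>c\<in>S i. \<bar>\<nu> c\<bar>))"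
    unfolding U_def sum_Union_level_subsets[OF S] sum_distrib_left
  proof (intro sum.cong refl)
    fix i c assume "i \<in> {..l}" "c \<in> S i"
    then have "level c = i"
      using S level_of_mem_cells by blast
    then show "\<bar>\<nu> c\<bar> / 2^level c = 1 / 2^i * \<bar>\<nu> c\<bar>"
      by simp
  qed
  finally show ?thesis
    by (simp add: U_def)
qed

lemma model_error_le_sparse:
  assumes s: "\<forall>p\<in>grid l. s p \<ge> 0"
    and opt: "\<forall>y\<in>model l w. l1_cells l (\<lambda>c. P_vec l s c - y_star c) \<le> l1_cells l (\<lambda>c. P_vec l s c - y c)"
    and K: "K \<ge> 1" and width: "(k + 1) * (2 * K + 1)^2 \<le> w" and s': "sparse l k s'"
  shows "l1_cells l (\<lambda>c. P_vec l s c - y_star c) \<le> 2 / real K * emd_norm l (\<lambda>p. s p - s' p)"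
proof -
  define Z where "Z = insert (0, 0) {p\<in>grid l. s' p \<noteq> 0}"
  have Z: "finite Z" "(0, 0) \<in> Z" "Z \<noteq> {}"
    by (simp_all add: Z_def)
  have "card Z \<le> k + 1"
    using s' card_insert_le_m1 by (simp add: Z_def sparse_def card_insert_if)
  then have "card Z * (2 * K + 1)^2 \<le> w"
    using width mult_le_mono1[of "card Z" "k + 1" "(2 * K + 1)^2"] by linarith
  then have "(\<lambda>c. if c \<in> near_tree l K Z then P_vec l s c else 0) \<in> model l w"
    using Z by (intro restrict_P_vec_in_model[OF s] near_tree_in_trees)
  then have "l1_cells l (\<lambda>c. P_vec l s c - y_star c)
      \<le> l1_cells l (\<lambda>c. P_vec l s c - (if c \<in> near_tree l K Z then P_vec l s c else 0))"
    by (rule opt[rule_format])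
  also have "\<dots> = (\<Sum>c\<in>all_cells l - near_tree l K Z. P_vec l s c)"
    by (rule l1_cells_restrict_P_vec[OF s])
  also have "\<dots> \<le> 2 / real K * (\<Sum>p\<in>grid l. dist_to l Z p * s p)"
    using tail_outside_near_tree_le[OF s K Z(1,3)] .
  also have "\<dots> \<le> 2 / real K * emd_norm l (\<lambda>p. s p - s' p)"
    using Z by (intro mult_left_mono dist_to_pairing_le_emd_norm) (auto simp: Z_def)
  finally show ?thesis .
qed

lemma width_bound:
  fixes \<eta> :: real
  assumes "0 < \<eta>" "\<eta> < 1" "k \<ge> 1"
  shows "(k + 1) * (2 * nat \<lceil>16 / \<eta>\<rceil> + 1)^2 \<le> nat \<lceil>2450 * real k / \<eta>^2\<rceil>"
proof -
  define K where "K = nat \<lceil>16 / \<eta>\<rceil>"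
  have "0 < 16 / \<eta>"
    using assms(1) by simp
  then have "0 \<le> \<lceil>16 / \<eta>\<rceil>"
    unfolding zero_le_ceiling by linarith
  then have "real K \<le> 16 / \<eta> + 1"
    using of_int_ceiling_le_add_one[of "16 / \<eta>"] by (simp add: K_def)
  also have "\<dots> \<le> 17 / \<eta>"
    using assms by (simp add: field_simps)
  finally have "2 * real K + 1 \<le> 35 / \<eta>"
    using assms by (simp add: field_simps)
  then have "(2 * real K + 1)^2 \<le> (35 / \<eta>)^2"
    by (rule power_mono) simp
  moreover have "real k + 1 \<le> 2 * real k"
    using assms(3) by simp
  ultimately have "(real k + 1) * (2 * real K + 1)^2 \<le> 2 * real k * (35 / \<eta>)^2"
    by (intro mult_mono) simp_all
  also have "\<dots> = 2450 * real k / \<eta>^2"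
    by (simp add: power_divide)
  also have "\<dots> \<le> real (nat \<lceil>2450 * real k / \<eta>^2\<rceil>)"
    by (rule real_nat_ceiling_ge)
  finally have "real ((k + 1) * (2 * K + 1)^2) \<le> real (nat \<lceil>2450 * real k / \<eta>^2\<rceil>)"
    by (simp only: of_nat_mult of_nat_add of_nat_1 of_nat_power of_nat_numeral)
  then show ?thesis
    unfolding K_def of_nat_le_iff .
qed

lemma trees_width_pos: "T \<in> trees l w \<Longrightarrow> w > 0"
  using card_mono[of "T \<inter> cells 0" "{root}"] by (fastforce simp: trees_def cells_0)

lemma tail_le_Inf_sparse:
  fixes \<eta> :: real
  assumes eta: "0 < \<eta>" "\<eta> < 1" and w: "w = nat \<lceil>2450 * real k / \<eta>^2\<rceil>"
    and s: "\<forall>p\<in>grid l. s p \<ge> 0" and T: "T \<in> trees l w"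
    and opt: "\<forall>y\<in>model l w. l1_cells l (\<lambda>c. P_vec l s c - y_star c) \<le> l1_cells l (\<lambda>c. P_vec l s c - y c)"
    and supp: "\<forall>c\<in>all_cells l. y_star c \<noteq> 0 \<longrightarrow> c \<in> T"
  shows "8 * (\<Sum>c\<in>all_cells l - T. P_vec l s c) \<le> \<eta> * Inf {emd_norm l (\<lambda>p. s p - s' p) | s'. sparse l k s'}"
proof -
  define K where "K = nat \<lceil>16 / \<eta>\<rceil>"
  have "16 / \<eta> \<le> real K"
    unfolding K_def by (rule real_nat_ceiling_ge)
  moreover have "16 < 16 / \<eta>"
    using eta by (simp add: field_simps)
  ultimately have "real K > 16"
    by linarith
  then have K: "K \<ge> 1" "2 / real K \<le> \<eta> / 8"
    using \<open>16 / \<eta> \<le> real K\<close> eta by (simp_all add: field_simps)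
  have "k \<ge> 1"
    using trees_width_pos[OF T] w by (cases k) auto
  then have width: "(k + 1) * (2 * K + 1)^2 \<le> w"
    unfolding K_def w using eta by (intro width_bound)
  have "8 * (\<Sum>c\<in>all_cells l - T. P_vec l s c) / \<eta> \<le> emd_norm l (\<lambda>p. s p - s' p)"
    if "sparse l k s'" for s'
  proof -
    have "(\<Sum>c\<in>all_cells l - T. P_vec l s c) \<le> l1_cells l (\<lambda>c. P_vec l s c - y_star c)"
      by (rule tail_le_l1_cells[OF s supp])
    also have "\<dots> \<le> 2 / real K * emd_norm l (\<lambda>p. s p - s' p)"
      by (rule model_error_le_sparse[OF s opt K(1) width that])
    also have "\<dots> \<le> \<eta> / 8 * emd_norm l (\<lambda>p. s p - s' p)"
      using K(2) emd_norm_nonneg by (rule mult_right_mono)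
    finally show ?thesis
      using eta by (simp add: field_simps)
  qed
  moreover have "sparse l k (\<lambda>_. 0)"
    by (simp add: sparse_def)
  ultimately have "8 * (\<Sum>c\<in>all_cells l - T. P_vec l s c) / \<eta>
      \<le> Inf {emd_norm l (\<lambda>p. s p - s' p) | s'. sparse l k s'}"
    by (intro cInf_greatest) auto
  then show ?thesis
    using eta by (simp add: field_simps)
qed

lemma emd_error_bound:
  fixes \<eta> :: real and l :: nat and s :: "point \<Rightarrow> real" and \<nu> :: "cell \<Rightarrow> real"
    and S :: "nat \<Rightarrow> cell set"
  defines "y_hat \<equiv> \<lambda>c. if c \<in> (\<Union>i\<le>l. S i) then y_noisy l s \<nu> c else 0"
  assumes eta: "0 < \<eta>" "\<eta> < 1" and w: "w = nat \<lceil>2450 * real k / \<eta>^2\<rceil>"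
    and s: "\<forall>p\<in>grid l. s p \<ge> 0" and S: "valid_run l w (y_noisy l s \<nu>) S"
    and fit: "\<forall>s'. (\<forall>p\<in>grid l. s' p \<ge> 0) \<longrightarrow>
      l1_cells l (\<lambda>c. y_hat c - P_vec l s_hat c) \<le> l1_cells l (\<lambda>c. y_hat c - P_vec l s' c)"
    and opt: "\<forall>y\<in>model l w. l1_cells l (\<lambda>c. P_vec l s c - y_star c) \<le> l1_cells l (\<lambda>c. P_vec l s c - y c)"
    and T: "T \<in> trees l w" and supp: "\<forall>c\<in>all_cells l. y_star c \<noteq> 0 \<longrightarrow> c \<in> T"
  shows "emd_norm l (\<lambda>p. s p - s_hat p)
    \<le> \<eta> * Inf {emd_norm l (\<lambda>p. s p - s' p) | s'. sparse l k s'}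
      + 12 * (\<Sum>i\<le>l. 1 / 2^i * (\<Sum>c\<in>(T \<inter> cells i - S i) \<union> S i. \<bar>\<nu> c\<bar>))"
proof -
  define N where "N = (\<Sum>i\<le>l. 1 / 2^i * (\<Sum>c\<in>(T \<inter> cells i - S i) \<union> S i. \<bar>\<nu> c\<bar>))"
  have "finite (S i)" if "i \<le> l" for i
    by (rule finite_subset[OF valid_run_subset_cells[OF S that]]) simp
  then have "(\<Sum>i\<le>l. 1 / 2^i * (\<Sum>c\<in>S i. \<bar>\<nu> c\<bar>)) \<le> N"
    unfolding N_def by (intro sum_mono mult_left_mono sum_mono2) auto
  then have "l1_cells l (\<lambda>c. P_vec l s c - y_hat c) \<le> N + (\<Sum>c\<in>all_cells l - (\<Union>i\<le>l. S i). P_vec l s c)"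
    using valid_run_subset_cells[OF S] unfolding y_hat_def
    by (subst l1_cells_sub_restricted_noisy[OF s]) auto
  moreover have "emd_norm l (\<lambda>p. s p - s_hat p) \<le> 4 * l1_cells l (\<lambda>c. P_vec l s c - y_hat c)"
    by (rule emd_norm_le_l1_fit[OF s fit])
  moreover note missed_mass_le[OF s S T] tail_le_Inf_sparse[OF eta w s T opt supp]
  ultimately show ?thesis
    unfolding N_def by linarith
qed

theorem lemma4:
  shows "\<exists>C1 C2 :: real. C1 > 0 \<and> C2 > 0 \<and>
    (\<forall>(\<eta>::real) (k::nat) (w::nat) (l::nat) (s::point \<Rightarrow> real) (\<nu>::cell \<Rightarrow> real)
       (S::nat \<Rightarrow> cell set) (s_hat::point \<Rightarrow> real) (y_star::cell \<Rightarrow> real) (T_star::cell set).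
      0 < \<eta> \<and> \<eta> < 1 \<and>
      w = nat \<lceil>C1 * real k / \<eta>^2\<rceil> \<and>
      (\<forall>p\<in>grid l. s p \<ge> 0) \<and>
      valid_run l w (y_noisy l s \<nu>) S \<and>
      (let y_hat = (\<lambda>c. if c \<in> (\<Union>i\<le>l. S i) then y_noisy l s \<nu> c else 0) in
         (\<forall>p\<in>grid l. s_hat p \<ge> 0) \<and>
         (\<forall>s'. (\<forall>p\<in>grid l. s' p \<ge> 0) \<longrightarrow>
            l1_cells l (\<lambda>c. y_hat c - P_vec l s_hat c) \<le> l1_cells l (\<lambda>c. y_hat c - P_vec l s' c))) \<and>
      y_star \<in> model l w \<and>
      (\<forall>y\<in>model l w. l1_cells l (\<lambda>c. P_vec l s c - y_star c) \<le> l1_cells l (\<lambda>c. P_vec l s c - y c)) \<and>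
      T_star \<in> trees l w \<and>
      (\<forall>c\<in>all_cells l. y_star c \<noteq> 0 \<longrightarrow> c \<in> T_star)
      \<longrightarrow>
      emd_norm l (\<lambda>p. s p - s_hat p)
        \<le> \<eta> * Inf {emd_norm l (\<lambda>p. s p - s' p) | s'. sparse l k s'}
          + C2 * (\<Sum>i\<le>l. (1 / 2^i) *
              (\<Sum>c\<in>((T_star \<inter> cells i) - S i) \<union> S i. \<bar>\<nu> c\<bar>)))"
  unfolding Let_def
  by (intro exI[of _ 2450] exI[of _ 12] conjI zero_less_numeral allI impI, elim conjE)
    (rule emd_error_bound; assumption)

end
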